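(* Let $M$ be a simple $\lambda$-term and $N$ a $\lambda$-term with $M \twoheadrightarrow_\beta N$. Then $N$ matches $M$ eventually, i.e. $\mathrm{BT}^c(M) =_{\mathrm{ev}} \mathrm{BT}^c(N)$.
   Context: Untyped $\lambda$-calculus modulo $\alpha$. Head reduction step: $\lambda x_1\ldots x_n.(\lambda y.P)QQ_1\ldots Q_m \to \lambda x_1\ldots x_n.P[y:=Q]Q_1\ldots Q_m$; hnf: $\lambda x_1\ldots x_n.\,yQ_1\ldots Q_m$. Clocked Böhm tree $\mathrm{BT}^c(M)$: $\bot$ if $M$ has no hnf; otherwise if $M\to_h^k \lambda x_1\ldots x_n.\,yM_1\ldots M_m$ is the head reduction to hnf, $\mathrm{BT}^c(M)$ is $\lambda x_1\ldots x_n.\,y\,\mathrm{BT}^c(M_1)\ldots\mathrm{BT}^c(M_m)$ with root annotated by $k$ (coinductive definition). Positions: sequences over $\{0,1,2\}$ ($0$ abstraction body, $1$ function, $2$ argument). $T_1 =_{\mathrm{ev}} T_2$ means $T_1,T_2$ coincide after erasing annotations and there is $\ell\in\mathbb N$ such that for all positions $p$ of $T_1$ with $|p|\ge \ell$, either neither subtree at $p$ has a root annotation or both have equal root annotations. A redex $(\lambda x.P)Q$ is linear if $x$ occurs at most once in $P$, call-by-value if $Q$ is a $\beta$-normal form, and simple if it is linear or call-by-value. The set of simple terms is the largest set $X$ of $\lambda$-terms such that every $M\in X$ either has no hnf, or its head reduction to hnf $M \to_h^* \lambda x_1\ldots x_n.\,yM_1\ldots M_m$ contracts only simple redexes and $M_1,\dots,M_m\in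 X$. *)

theory Defs
  imports Main
begin

datatype dB = Var nat | App dB dB | Abs dB

primrec lift :: "dB \<Rightarrow> nat \<Rightarrow> dB" where
  "lift (Var i) k = (if i < k then Var i else Var (i + 1))"
| "lift (App s t) k = App (lift s k) (lift t k)"
| "lift (Abs s) k = Abs (lift s (k + 1))"

primrec subst :: "dB \<Rightarrow> dB \<Rightarrow> nat \<Rightarrow> dB" where
  "subst (Var i) s k = (if k < i then Var (i - 1) else if i = k then s else Var i)"
| "subst (App t u) s k = App (subst t s k) (subst u s k)"
| "subst (Abs t) s k = Abs (subst t (lift s 0) (k + 1))"

inductive beta :: "dB \<Rightarrow> dB \<Rightarrow> bool" where
  beta_redex: "beta (App (Abs s) t) (subst s t 0)"
| appL: "beta s t \<Longrightarrow> beta (App s u) (App t u)"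
| appR: "beta s t \<Longrightarrow> beta (App u s) (App u t)"
| abs: "beta s t \<Longrightarrow> beta (Abs s) (Abs t)"

abbreviation beta_reds :: "dB \<Rightarrow> dB \<Rightarrow> bool" where
  "beta_reds \<equiv> beta\<^sup>*\<^sup>*"

definition beta_nf :: "dB \<Rightarrow> bool" where
  "beta_nf Q \<longleftrightarrow> \<not> (\<exists>N. beta Q N)"

fun is_abs :: "dB \<Rightarrow> bool" where
  "is_abs (Abs _) = True"
| "is_abs _ = False"

inductive hstep_r :: "dB \<times> dB \<Rightarrow> dB \<Rightarrow> dB \<Rightarrow> bool" where
  "hstep_r (P, Q) (App (Abs P) Q) (subst P Q 0)"
| "hstep_r r M M' \<Longrightarrow> \<not> is_abs M \<Longrightarrow> hstep_r r (App M N) (App M' N)"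
| "hstep_r r M M' \<Longrightarrow> hstep_r r (Abs M) (Abs M')"

inductive hpath :: "(dB \<times> dB) list \<Rightarrow> dB \<Rightarrow> dB \<Rightarrow> bool" where
  "hpath [] M M"
| "hstep_r r M M' \<Longrightarrow> hpath rs M' M'' \<Longrightarrow> hpath (r # rs) M M''"

fun strip_abs :: "dB \<Rightarrow> nat \<times> dB" where
  "strip_abs (Abs t) = (let (n, b) = strip_abs t in (Suc n, b))"
| "strip_abs t = (0, t)"

fun head_args :: "dB \<Rightarrow> dB \<times> dB list" where
  "head_args (App s t) = (let (h, as) = head_args s in (h, as @ [t]))"
| "head_args t = (t, [])"

text \<open>Head normal form: \<lambda>x1..xn. y Q1 .. Qm\<close>
definition hnf :: "dB \<Rightarrow> bool" where
  "hnf N \<longleftrightarrow> (\<exists>y. fst (head_args (snd (strip_abs N))) = Var y)"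

definition has_hnf :: "dB \<Rightarrow> bool" where
  "has_hnf M \<longleftrightarrow> (\<exists>N. beta_reds M N \<and> hnf N)"

definition hnf_steps :: "dB \<Rightarrow> nat" where
  "hnf_steps M = (LEAST k. \<exists>rs N. hpath rs M N \<and> hnf N \<and> length rs = k)"

definition hnf_of :: "dB \<Rightarrow> dB" where
  "hnf_of M = (SOME N. \<exists>rs. hpath rs M N \<and> hnf N)"

definition hnf_nabs :: "dB \<Rightarrow> nat" where
  "hnf_nabs M = fst (strip_abs (hnf_of M))"

definition hnf_head :: "dB \<Rightarrow> nat" where
  "hnf_head M = (case fst (head_args (snd (strip_abs (hnf_of M)))) of Var y \<Rightarrow> y | _ \<Rightarrow> 0)"

definition hnf_args :: "dB \<Rightarrow> dB list" where
  "hnf_args M = snd (head_args (snd (strip_abs (hnf_of M))))"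

text \<open>A Boehm-tree node Nd a n y ts stands for \<lambda>x1..xn. y T1 .. Tm (ts = [T1..Tm]),
  with root annotation a; Bot is the unannotated leaf \<bottom>.\<close>
codatatype 'a bt = Bot | Nd 'a nat nat "'a bt list"

primcorec bt_c :: "dB \<Rightarrow> nat bt" where
  "bt_c M = (if has_hnf M
     then Nd (hnf_steps M) (hnf_nabs M) (hnf_head M) (map bt_c (hnf_args M))
     else Bot)"

definition erase :: "'a bt \<Rightarrow> unit bt" where
  "erase T = map_bt (\<lambda>_. ()) T"

text \<open>Root annotation of the subtree at position p (over {0,1,2}, 0 = abstraction body,
  1 = function, 2 = argument) of the tree, viewing Nd a n y [T1..Tm] as the
  term-tree \<lambda>x1..xn. (..((y T1) T2)..) Tm. None if p is not a position or
  the subtree at p carries no root annotation.\<close>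
function ann_at :: "'a bt \<Rightarrow> nat list \<Rightarrow> 'a option"
and spine_at :: "nat \<Rightarrow> 'a bt list \<Rightarrow> nat list \<Rightarrow> 'a option" where
  "ann_at Bot p = None"
| "ann_at (Nd a n y ts) [] = Some a"
| "ann_at (Nd a n y ts) (d # p) = spine_at n ts (d # p)"
| "spine_at n ts [] = None"
| "spine_at (Suc n) ts (d # p) = (if d = 0 then spine_at n ts p else None)"
| "spine_at 0 ts (d # p) =
     (if ts = [] then None
      else if d = 1 then spine_at 0 (butlast ts) p
      else if d = 2 then ann_at (last ts) p
      else None)"
  by pat_completeness auto
termination
  by (relation "measure (\<lambda>x. case x of Inl (t, p) \<Rightarrow> 2 * length p + 1
                                    | Inr (n, ts, p) \<Rightarrow> 2 * length p)") auto

definition ev_eq :: "'a bt \<Rightarrow> 'a bt \<Rightarrow> bool" where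
  "ev_eq T1 T2 \<longleftrightarrow> erase T1 = erase T2 \<and>
     (\<exists>l. \<forall>p. length p \<ge> l \<longrightarrow> ann_at T1 p = ann_at T2 p)"

primrec occ :: "nat \<Rightarrow> dB \<Rightarrow> nat" where
  "occ i (Var j) = (if i = j then 1 else 0)"
| "occ i (App s t) = occ i s + occ i t"
| "occ i (Abs t) = occ (Suc i) t"

definition linear_redex :: "dB \<times> dB \<Rightarrow> bool" where
  "linear_redex r \<longleftrightarrow> occ 0 (fst r) \<le> 1"

definition cbv_redex :: "dB \<times> dB \<Rightarrow> bool" where
  "cbv_redex r \<longleftrightarrow> beta_nf (snd r)"

definition simple_redex :: "dB \<times> dB \<Rightarrow> bool" where
  "simple_redex r \<longleftrightarrow> linear_redex r \<or> cbv_redex r"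

coinductive simple_term :: "dB \<Rightarrow> bool" where
  "\<not> has_hnf M \<Longrightarrow> simple_term M"
| "hpath rs M N \<Longrightarrow> hnf N \<Longrightarrow> (\<forall>r\<in>set rs. simple_redex r) \<Longrightarrow>
   (\<forall>A\<in>set (snd (head_args (snd (strip_abs N)))). simple_term A) \<Longrightarrow> simple_term M"

end

theory Submission
  imports Defs
begin

text \<open>Suppose M reduces to N in s steps. Tracing these steps along the head reduction of M
  shows that N has a head normal form with the same binders and head variable, reached by a
  head reduction that is no longer, and that the arguments of the head normal form of M reduce
  to those of N, where the number of head steps saved plus the number of argument steps is at
  most s. This is where simplicity enters: a step inside the argument of a simple redex can be
  replayed after contraction, because such an argument is either normal or used at most once.
  Coinductively, the Boehm trees of M and N thus agree up to annotations; by induction on the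
  depth, their annotations differ at no more than s positions, hence only above some depth.\<close>

section \<open>Substitution and beta reduction\<close>

lemma lift_lift:
  "i < k + 1 \<Longrightarrow> lift (lift t i) (Suc k) = lift (lift t k) i"
  by (induct t arbitrary: i k) auto

lemma lift_subst_lt:
  "i < j + 1 \<Longrightarrow> lift (subst t s j) i = subst (lift t i) (lift s i) (j + 1)"
  by (induct t arbitrary: i j s) (auto simp: lift_lift)

lemma lift_subst:
  "j < i + 1 \<Longrightarrow> lift (subst t s j) i = subst (lift t (i + 1)) (lift s i) j"
  by (induct t arbitrary: i j s) (simp_all add: diff_Suc lift_lift split: nat.split)

lemma subst_lift [simp]: "subst (lift t k) s k = t"
  by (induct t arbitrary: k s) simp_all

lemma subst_subst:
  "i < j + 1 \<Longrightarrow> subst (subst t (lift v i) (Suc j)) (subst u v j) i = subst (subst t u i) v j"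
  by (induct t arbitrary: i j u v)
    (simp_all add: diff_Suc lift_lift [symmetric] lift_subst_lt split: nat.split)

lemma beta_lift: "beta s t \<Longrightarrow> beta (lift s i) (lift t i)"
  by (induct arbitrary: i rule: beta.induct)
    (auto intro: beta.intros simp: lift_subst)

lemma beta_subst_body: "beta r s \<Longrightarrow> beta (subst r t i) (subst s t i)"
proof (induct arbitrary: t i rule: beta.induct)
  case (beta_redex s u)
  show ?case using beta.beta_redex[of "subst s (lift t 0) (Suc i)" "subst u t i"]
    by (simp add: subst_subst[of 0, simplified, symmetric])
qed (auto intro: beta.intros)

lemma subst_occ_0: "occ k P = 0 \<Longrightarrow> subst P Q k = subst P Q' k"
  by (induct P arbitrary: k Q Q') auto

lemma beta_subst_occ_1: "occ k P = 1 \<Longrightarrow> beta Q Q' \<Longrightarrow> beta (subst P Q k) (subst P Q' k)"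
proof (induct P arbitrary: k Q Q')
  case (App s t)
  show ?case
  proof (cases "occ k s")
    case 0
    with App show ?thesis by (auto intro: beta.intros simp: subst_occ_0[OF 0, of Q Q'])
  next
    case (Suc n)
    with App have "occ k t = 0" by simp
    with Suc App show ?thesis by (auto intro: beta.intros simp: subst_occ_0[of k t Q Q'])
  qed
next
  case (Abs P)
  then show ?case by (simp add: beta.abs beta_lift)
qed (auto intro: beta.intros)

lemma relpowp_map:
  assumes "\<And>x y. R x y \<Longrightarrow> S (f x) (f y)"
  shows "(R ^^ k) x y \<Longrightarrow> (S ^^ k) (f x) (f y)"
proof (induct k arbitrary: y)
  case (Suc k)
  from Suc.prems obtain z where "(R ^^ k) x z" "R z y" by (rule relpowp_Suc_E)
  with Suc.hyps assms show ?case by (meson relpowp_Suc_I)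
qed simp

text \<open>If Q reduces at all it is not normal, so the redex is linear and Q is copied at most once.\<close>
lemma simple_redex_subst_reds:
  assumes "simple_redex (P, Q)" and "(beta ^^ b) Q Q'"
  shows "\<exists>b'\<le>b. (beta ^^ b') (subst P Q 0) (subst P Q' 0)"
proof (cases b)
  case 0
  with assms(2) show ?thesis by auto
next
  case (Suc b0)
  with assms(2) obtain Q1 where "beta Q Q1" by (metis relpowp_Suc_D2)
  with assms(1) have "occ 0 P \<le> 1"
    by (auto simp: simple_redex_def cbv_redex_def linear_redex_def beta_nf_def)
  then consider "occ 0 P = 0" | "occ 0 P = 1" by linarith
  then show ?thesis
  proof cases
    case 1
    then show ?thesis by (intro exI[of _ 0]) (simp add: subst_occ_0[OF 1, of Q Q'])
  next
    case 2
    then have "(beta ^^ b) (subst P Q 0) (subst P Q' 0)"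
      by (intro relpowp_map[OF _ assms(2)]) (rule beta_subst_occ_1)
    then show ?thesis by blast
  qed
qed

section \<open>Head normal forms and head reduction\<close>

definition absn :: "nat \<Rightarrow> dB \<Rightarrow> dB" where
  "absn n t = (Abs ^^ n) t"

definition apps :: "dB \<Rightarrow> dB list \<Rightarrow> dB" where
  "apps h As = foldl App h As"

definition hnf_form :: "nat \<Rightarrow> nat \<Rightarrow> dB list \<Rightarrow> dB" where
  "hnf_form n y As = absn n (apps (Var y) As)"

definition redex_form :: "nat \<Rightarrow> dB \<Rightarrow> dB \<Rightarrow> dB list \<Rightarrow> dB" where
  "redex_form n P Q As = absn n (apps (App (Abs P) Q) As)"

definition contractum_form :: "nat \<Rightarrow> dB \<Rightarrow> dB \<Rightarrow> dB list \<Rightarrow> dB" where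
  "contractum_form n P Q As = absn n (apps (subst P Q 0) As)"

lemma absn_0 [simp]: "absn 0 t = t"
  by (simp add: absn_def)

lemma absn_Suc [simp]: "absn (Suc n) t = Abs (absn n t)"
  by (simp add: absn_def)

lemma apps_Nil [simp]: "apps h [] = h"
  by (simp add: apps_def)

lemma apps_Cons [simp]: "apps h (a # As) = apps (App h a) As"
  by (simp add: apps_def)

lemma apps_snoc [simp]: "apps h (As @ [a]) = App (apps h As) a"
  by (simp add: apps_def)

lemma not_is_abs_apps: "\<not> is_abs h \<Longrightarrow> \<not> is_abs (apps h As)"
  by (induct As rule: rev_induct) auto

lemma strip_abs_absn: "\<not> is_abs t \<Longrightarrow> strip_abs (absn n t) = (n, t)"
  by (induct n) (cases t; auto)+

lemma head_args_apps: "head_args (apps h As) = (fst (head_args h), snd (head_args h) @ As)"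
  by (induct As rule: rev_induct) (auto split: prod.splits)

lemma absn_strip_abs: "t = absn (fst (strip_abs t)) (snd (strip_abs t))"
  by (induct t rule: strip_abs.induct) (auto split: prod.splits)

lemma apps_head_args: "t = apps (fst (head_args t)) (snd (head_args t))"
  by (induct t rule: head_args.induct) (auto split: prod.splits)

lemma strip_abs_hnf_form: "strip_abs (hnf_form n y As) = (n, apps (Var y) As)"
  by (simp add: hnf_form_def strip_abs_absn not_is_abs_apps)

lemma head_args_apps_Var: "head_args (apps (Var y) As) = (Var y, As)"
  by (simp add: head_args_apps)

lemma hnf_hnf_form: "hnf (hnf_form n y As)"
  by (simp add: hnf_def strip_abs_hnf_form head_args_apps_Var)

lemma hnfE:
  assumes "hnf H"
  obtains n y As where "H = hnf_form n y As"
proof -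
  from assms obtain y where y: "fst (head_args (snd (strip_abs H))) = Var y"
    by (auto simp: hnf_def)
  have "H = absn (fst (strip_abs H)) (snd (strip_abs H))"
    by (rule absn_strip_abs)
  also have "snd (strip_abs H) = apps (Var y) (snd (head_args (snd (strip_abs H))))"
    using apps_head_args y by metis
  finally show ?thesis
    using that unfolding hnf_form_def by blast
qed

lemma not_hnf_redex_form: "\<not> hnf (redex_form n P Q As)"
  by (simp add: hnf_def redex_form_def strip_abs_absn not_is_abs_apps head_args_apps)

lemma hstep_rE:
  assumes "hstep_r r M M'"
  obtains n P Q As where "r = (P, Q)" "M = redex_form n P Q As" "M' = contractum_form n P Q As"
  using assms
proof (induct arbitrary: thesis rule: hstep_r.induct)
  case (1 P Q)
  show ?case by (rule 1(1)[of P Q 0 "[]"]) (simp_all add: redex_form_def contractum_form_def)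
next
  case (2 r M M' N)
  obtain n P Q As where h: "r = (P, Q)" "M = redex_form n P Q As" "M' = contractum_form n P Q As"
    by (rule 2(2))
  with 2(3) have "n = 0" by (cases n) (auto simp: redex_form_def)
  with h show ?case
    by (intro 2(4)[of P Q 0 "As @ [N]"]) (simp_all add: redex_form_def contractum_form_def)
next
  case (3 r M M')
  obtain n P Q As where h: "r = (P, Q)" "M = redex_form n P Q As" "M' = contractum_form n P Q As"
    by (rule 3(2))
  then show ?case
    by (intro 3(3)[of P Q "Suc n" As]) (simp_all add: redex_form_def contractum_form_def)
qed

lemma hstep_r_redex_form: "hstep_r (P, Q) (redex_form n P Q As) (contractum_form n P Q As)"
proof (induct n)
  case 0
  show ?case unfolding redex_form_def contractum_form_def absn_0
  proof (induct As rule: rev_induct)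
    case (snoc a As)
    have "\<not> is_abs (apps (App (Abs P) Q) As)"
      by (rule not_is_abs_apps) simp
    with snoc show ?case by (simp add: hstep_r.intros)
  qed (simp add: hstep_r.intros)
next
  case (Suc n)
  then show ?case by (simp add: redex_form_def contractum_form_def hstep_r.intros)
qed

lemma hnf_no_hstep_r: "hnf M \<Longrightarrow> \<not> hstep_r r M M'"
  by (metis hstep_rE not_hnf_redex_form)

lemma hstep_r_deterministic:
  "hstep_r r M M1 \<Longrightarrow> hstep_r r' M M2 \<Longrightarrow> r = r' \<and> M1 = M2"
proof (induct arbitrary: r' M2 rule: hstep_r.induct)
  case (1 P Q)
  then show ?case by (cases rule: hstep_r.cases) simp_all
next
  case (2 r M M' N)
  from 2(4) show ?case
    by (cases rule: hstep_r.cases) (use 2(2,3) in auto)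
next
  case (3 r M M')
  from 3(3) show ?case
    by (cases rule: hstep_r.cases) (use 3(2) in auto)
qed

lemma hpath_hnf_unique:
  "hpath rs M H \<Longrightarrow> hnf H \<Longrightarrow> hpath rs' M H' \<Longrightarrow> hnf H' \<Longrightarrow> rs = rs' \<and> H = H'"
proof (induct arbitrary: rs' rule: hpath.induct)
  case (1 M)
  from 1(2) show ?case
    by (cases rule: hpath.cases) (use 1(1) hnf_no_hstep_r in auto)
next
  case (2 r M M' rs M'')
  note step = \<open>hstep_r r M M'\<close> and IH = 2(3)[OF \<open>hnf M''\<close>]
  from \<open>hpath rs' M H'\<close> show ?case
  proof (cases rule: hpath.cases)
    case 1
    with step \<open>hnf H'\<close> hnf_no_hstep_r show ?thesis by blast
  next
    case (2 r2 M2 rs2)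
    with step have "r = r2" "M' = M2"
      using hstep_r_deterministic by blast+
    with 2 IH[of rs2] \<open>hnf H'\<close> show ?thesis by auto
  qed
qed

lemma hpath_beta_reds: "hpath rs M H \<Longrightarrow> beta_reds M H"
proof (induct rule: hpath.induct)
  case (2 r M M' rs M'')
  from \<open>hstep_r r M M'\<close> have "beta M M'"
    by (induct rule: hstep_r.induct) (simp_all add: beta.beta_redex beta.appL beta.abs)
  with 2(3) show ?case by (simp add: converse_rtranclp_into_rtranclp)
qed simp

lemma hpath_hnf_form_components:
  assumes p: "hpath rs M (hnf_form n y As)"
  shows "has_hnf M" "hnf_steps M = length rs"
    "hnf_nabs M = n" "hnf_head M = y" "hnf_args M = As"
proof -
  have H: "hnf (hnf_form n y As)" by (rule hnf_hnf_form)
  have uniq: "rs = rs' \<and> hnf_form n y As = N" if "hpath rs' M N" "hnf N" for rs' N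
    using hpath_hnf_unique[OF p H that] .
  show "has_hnf M"
    unfolding has_hnf_def using hpath_beta_reds[OF p] H by blast
  show "hnf_steps M = length rs"
    unfolding hnf_steps_def
  proof (rule Least_equality)
    show "\<exists>rs' N. hpath rs' M N \<and> hnf N \<and> length rs' = length rs"
      using p H by blast
  qed (use uniq in auto)
  have "\<exists>rs'. hpath rs' M (hnf_of M) \<and> hnf (hnf_of M)"
    unfolding hnf_of_def by (rule someI_ex) (use p H in blast)
  with uniq have "hnf_of M = hnf_form n y As" by metis
  then show "hnf_nabs M = n" "hnf_head M = y" "hnf_args M = As"
    by (simp_all add: hnf_nabs_def hnf_head_def hnf_args_def strip_abs_hnf_form head_args_apps_Var)
qed

section \<open>Counting reduction steps on head forms\<close>

lemma beta_absn: "beta t t' \<Longrightarrow> beta (absn n t) (absn n t')"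
  by (induct n) (auto intro: beta.abs)

lemma beta_apps_fun: "beta X X' \<Longrightarrow> beta (apps X As) (apps X' As)"
  by (induct As arbitrary: X X') (auto intro: beta.appL)

lemma beta_absn_inv: "beta (absn n t) N \<Longrightarrow> \<exists>t'. N = absn n t' \<and> beta t t'"
proof (induct n arbitrary: N)
  case (Suc n)
  then obtain u where "N = Abs u" "beta (absn n t) u"
    by (auto elim: beta.cases)
  with Suc.hyps show ?case by auto
qed simp

lemma beta_apps_inv:
  assumes "beta (apps h As) N" and "\<not> is_abs h"
  shows "(\<exists>h'. beta h h' \<and> N = apps h' As) \<or>
    (\<exists>i B. i < length As \<and> beta (As ! i) B \<and> N = apps h (As[i := B]))"
  using assms
proof (induct As arbitrary: N rule: rev_induct)
  case (snoc a As)
  have "\<not> is_abs (apps h As)" using snoc(3) by (rule not_is_abs_apps)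
  from snoc(2) have "beta (App (apps h As) a) N" by simp
  then show ?case
  proof (cases rule: beta.cases)
    case (beta_redex s)
    with \<open>\<not> is_abs (apps h As)\<close> show ?thesis by simp
  next
    case (appL t)
    from snoc(1)[OF appL(2) snoc(3)] appL(1) show ?thesis
      by (auto simp: nth_append list_update_append)
  next
    case (appR t)
    then show ?thesis by (intro disjI2 exI[of _ "length As"] exI[of _ t]) simp
  qed
qed simp

definition args_reds :: "nat list \<Rightarrow> dB list \<Rightarrow> dB list \<Rightarrow> bool" where
  "args_reds cs As Bs \<longleftrightarrow> length cs = length As \<and> length Bs = length As \<and>
     (\<forall>i<length As. (beta ^^ (cs ! i)) (As ! i) (Bs ! i))"

lemma args_reds_refl: "args_reds (replicate (length As) 0) As As"
  by (simp add: args_reds_def)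

lemma args_reds_update:
  assumes "args_reds cs As Bs" and "i < length Bs" and "beta (Bs ! i) B"
  obtains cs' where "args_reds cs' As (Bs[i := B])" "sum_list cs' = Suc (sum_list cs)"
proof
  show "args_reds (cs[i := Suc (cs ! i)]) As (Bs[i := B])"
    using assms unfolding args_reds_def by (auto simp: nth_list_update intro: relpowp_Suc_I)
  show "sum_list (cs[i := Suc (cs ! i)]) = Suc (sum_list cs)"
    using assms by (simp add: args_reds_def sum_list_update)
qed

lemma args_reds_apps: "args_reds cs As Bs \<Longrightarrow> (beta ^^ sum_list cs) (apps X As) (apps X Bs)"
proof (induct As arbitrary: X cs Bs)
  case (Cons a As)
  then obtain c cs' b Bs' where cs: "cs = c # cs'" and Bs: "Bs = b # Bs'"
    by (cases cs; cases Bs) (auto simp: args_reds_def)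
  with Cons.prems have a: "(beta ^^ c) a b" and As: "args_reds cs' As Bs'"
    by (auto simp: args_reds_def)
  have "(beta ^^ c) (apps (App X a) As) (apps (App X b) As)"
    by (rule relpowp_map[OF _ a]) (intro beta_apps_fun beta.appR)
  with Cons.hyps[OF As] show ?case
    unfolding cs Bs by (auto intro: relpowp_trans)
qed (simp add: args_reds_def)

lemma hnf_form_reds:
  assumes "(beta ^^ s) (hnf_form n y As) N"
  obtains Bs cs where "args_reds cs As Bs" "sum_list cs = s" "N = hnf_form n y Bs"
  using assms
proof (induct s arbitrary: N thesis)
  case 0
  with args_reds_refl[of As] show ?case by (auto simp: sum_list_replicate)
next
  case (Suc s)
  from Suc.prems(2) obtain X where "(beta ^^ s) (hnf_form n y As) X" "beta X N"
    by (rule relpowp_Suc_E)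
  with Suc.hyps obtain Bs cs where Bs: "args_reds cs As Bs" "sum_list cs = s" "X = hnf_form n y Bs"
    by metis
  with \<open>beta X N\<close> obtain t' where N: "N = absn n t'" "beta (apps (Var y) Bs) t'"
    using beta_absn_inv unfolding hnf_form_def by blast
  from beta_apps_inv[OF N(2)] obtain i B where
    "i < length Bs" "beta (Bs ! i) B" "t' = apps (Var y) (Bs[i := B])"
    by (auto elim: beta.cases)
  with Bs N show ?case
    by (metis Suc.prems(1) args_reds_update hnf_form_def)
qed

lemma beta_redex_formE:
  assumes "beta (redex_form n P Q As) X"
  obtains "X = contractum_form n P Q As"
  | P' where "beta P P'" "X = redex_form n P' Q As"
  | Q' where "beta Q Q'" "X = redex_form n P Q' As"
  | i B where "i < length As" "beta (As ! i) B" "X = redex_form n P Q (As[i := B])"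
proof -
  from assms obtain t' where X: "X = absn n t'" "beta (apps (App (Abs P) Q) As) t'"
    using beta_absn_inv unfolding redex_form_def by blast
  from beta_apps_inv[OF X(2)] consider
    h' where "beta (App (Abs P) Q) h'" "t' = apps h' As"
    | i B where "i < length As" "beta (As ! i) B" "t' = apps (App (Abs P) Q) (As[i := B])"
    by auto
  then show thesis
  proof cases
    case (1 h')
    from 1(1) show thesis
    proof (cases rule: beta.cases)
      case beta_redex
      with 1 X that(1) show thesis by (simp add: contractum_form_def)
    next
      case (appL t)
      from appL(2) obtain P' where "t = Abs P'" "beta P P'"
        by (cases rule: beta.cases) auto
      with appL 1 X that(2) show thesis by (simp add: redex_form_def)
    next
      case (appR t)
      with 1 X that(3) show thesis by (simp add: redex_form_def)
    qed
  next
    case (2 i B)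
    with X that(4) show thesis by (simp add: redex_form_def)
  qed
qed

definition redex_reds :: "nat \<Rightarrow> dB \<Rightarrow> dB \<Rightarrow> dB list \<Rightarrow> dB \<Rightarrow> dB \<Rightarrow> dB list \<Rightarrow> bool" where
  "redex_reds k P Q As P' Q' As' \<longleftrightarrow>
     (\<exists>a b cs. (beta ^^ a) P P' \<and> (beta ^^ b) Q Q' \<and> args_reds cs As As' \<and> a + b + sum_list cs = k)"

lemma redex_reds_refl: "redex_reds 0 P Q As P Q As"
  unfolding redex_reds_def using args_reds_refl[of As] by (force simp: sum_list_replicate)

lemma redex_reds_step:
  assumes "redex_reds k P Q As P' Q' As'" and "beta (redex_form n P' Q' As') X"
  shows "X = contractum_form n P' Q' As' \<or>
    (\<exists>P'' Q'' As''. redex_reds (Suc k) P Q As P'' Q'' As'' \<and> X = redex_form n P'' Q'' As'')"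
proof -
  from assms(1) obtain a b cs where red: "(beta ^^ a) P P'" "(beta ^^ b) Q Q'"
    "args_reds cs As As'" and k: "a + b + sum_list cs = k"
    unfolding redex_reds_def by blast
  from assms(2) show ?thesis
  proof (cases rule: beta_redex_formE)
    case (2 P'')
    have "redex_reds (Suc k) P Q As P'' Q' As'"
      unfolding redex_reds_def
      using relpowp_Suc_I[OF red(1) 2(1)] red(2,3) k by (metis add_Suc)
    with 2 show ?thesis by blast
  next
    case (3 Q'')
    have "redex_reds (Suc k) P Q As P' Q'' As'"
      unfolding redex_reds_def
      using red(1) relpowp_Suc_I[OF red(2) 3(1)] red(3) k by (metis add_Suc_right add_Suc)
    with 3 show ?thesis by blast
  next
    case (4 i B)
    with red(3) obtain cs' where "args_reds cs' As (As'[i := B])" "sum_list cs' = Suc (sum_list cs)"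
      using args_reds_update by blast
    with red(1,2) k have "redex_reds (Suc k) P Q As P' Q' (As'[i := B])"
      unfolding redex_reds_def by (metis add_Suc_right)
    with 4 show ?thesis by blast
  qed simp
qed

lemma redex_form_reds:
  assumes "(beta ^^ s) (redex_form n P Q As) N"
  shows "(\<exists>P' Q' As'. redex_reds s P Q As P' Q' As' \<and> N = redex_form n P' Q' As') \<or>
    (\<exists>P' Q' As' k t. redex_reds k P Q As P' Q' As' \<and> k + 1 + t = s \<and>
       (beta ^^ t) (contractum_form n P' Q' As') N)"
  using assms
proof (induct s arbitrary: N)
  case 0
  then show ?case by (intro disjI1 exI[of _ P] exI[of _ Q] exI[of _ As]) (simp add: redex_reds_refl)
next
  case (Suc s)
  from Suc.prems obtain X where X: "(beta ^^ s) (redex_form n P Q As) X" "beta X N"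
    by (rule relpowp_Suc_E)
  from Suc.hyps[OF X(1)] show ?case
  proof (elim disjE exE conjE)
    fix P' Q' As'
    assume red: "redex_reds s P Q As P' Q' As'" and "X = redex_form n P' Q' As'"
    with X(2) have "N = contractum_form n P' Q' As' \<or>
      (\<exists>P'' Q'' As''. redex_reds (Suc s) P Q As P'' Q'' As'' \<and> N = redex_form n P'' Q'' As'')"
      by (simp add: redex_reds_step)
    then show ?case
    proof
      assume "N = contractum_form n P' Q' As'"
      then have "(beta ^^ 0) (contractum_form n P' Q' As') N" by simp
      moreover have "s + 1 + 0 = Suc s" by simp
      ultimately show ?case using red by blast
    qed blast
  next
    fix P' Q' As' k t
    assume "redex_reds k P Q As P' Q' As'" "k + 1 + t = s"
      and "(beta ^^ t) (contractum_form n P' Q' As') X"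
    moreover from this(3) X(2) have "(beta ^^ Suc t) (contractum_form n P' Q' As') N"
      by (rule relpowp_Suc_I)
    moreover from \<open>k + 1 + t = s\<close> have "k + 1 + Suc t = Suc s" by simp
    ultimately show ?case by blast
  qed
qed

lemma contractum_form_reds:
  assumes "simple_redex (P, Q)" and "redex_reds k P Q As P' Q' As'"
  shows "\<exists>k'\<le>k. (beta ^^ k') (contractum_form n P Q As) (contractum_form n P' Q' As')"
proof -
  from assms(2) obtain a b cs where red: "(beta ^^ a) P P'" "(beta ^^ b) Q Q'"
    "args_reds cs As As'" "a + b + sum_list cs = k"
    unfolding redex_reds_def by blast
  from simple_redex_subst_reds[OF assms(1) red(2)] obtain b' where
    b': "b' \<le> b" "(beta ^^ b') (subst P Q 0) (subst P Q' 0)" by blast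
  have "(beta ^^ a) (subst P Q' 0) (subst P' Q' 0)"
    by (rule relpowp_map[OF _ red(1)]) (rule beta_subst_body)
  with b'(2) have "(beta ^^ (b' + a)) (subst P Q 0) (subst P' Q' 0)"
    by (rule relpowp_trans)
  then have "(beta ^^ (b' + a)) (contractum_form n P Q As) (contractum_form n P' Q' As)"
    unfolding contractum_form_def
    by (rule relpowp_map[where f = "\<lambda>x. absn n (apps x As)", rotated])
      (intro beta_absn beta_apps_fun)
  moreover have "(beta ^^ sum_list cs) (contractum_form n P' Q' As) (contractum_form n P' Q' As')"
    unfolding contractum_form_def
    by (rule relpowp_map[where f = "absn n", rotated, OF args_reds_apps[OF red(3)]]) (rule beta_absn)
  ultimately have "(beta ^^ (b' + a + sum_list cs)) (contractum_form n P Q As) (contractum_form n P' Q' As')"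
    by (rule relpowp_trans)
  with b'(1) red(4) show ?thesis by (intro exI[of _ "b' + a + sum_list cs"]) simp
qed

text \<open>Induction along the head reduction: the reduction either contracts the head redex,
  trading one head step for one of its own, or only reduces inside the parts of the redex,
  and these reductions can be replayed after the contraction with no more steps.\<close>
lemma simple_hpath_reds:
  assumes "hpath rs M (hnf_form n y As)" and "\<forall>r\<in>set rs. simple_redex r"
    and "(beta ^^ s) M N"
  shows "\<exists>rs' Bs cs. hpath rs' N (hnf_form n y Bs) \<and> args_reds cs As Bs \<and>
    length rs' \<le> length rs \<and> sum_list cs + (length rs - length rs') \<le> s"
  using assms
proof (induct rs M "hnf_form n y As" arbitrary: s N rule: hpath.induct)
  case 1
  obtain Bs cs where "args_reds cs As Bs" "sum_list cs = s" "N = hnf_form n y Bs"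
    using hnf_form_reds[OF \<open>(beta ^^ s) (hnf_form n y As) N\<close>] .
  then show ?case by (auto intro: hpath.intros)
next
  case (2 r M M1 rs)
  from \<open>hstep_r r M M1\<close> obtain n0 P Q As0 where
    r: "r = (P, Q)" and M: "M = redex_form n0 P Q As0" and M1: "M1 = contractum_form n0 P Q As0"
    by (rule hstep_rE)
  with 2 have simple: "simple_redex (P, Q)" "\<forall>r\<in>set rs. simple_redex r" by auto
  note IH = 2(3)[OF simple(2)]
  from redex_form_reds[OF \<open>(beta ^^ s) M N\<close>[unfolded M]] show ?case
  proof (elim disjE exE conjE)
    fix P' Q' As'
    assume red: "redex_reds s P Q As0 P' Q' As'" and N: "N = redex_form n0 P' Q' As'"
    from contractum_form_reds[OF simple(1) red] obtain s' where
      "s' \<le> s" "(beta ^^ s') M1 (contractum_form n0 P' Q' As')"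
      unfolding M1 by blast
    with IH obtain rs' Bs cs where rs': "hpath rs' (contractum_form n0 P' Q' As') (hnf_form n y Bs)"
      "args_reds cs As Bs" "length rs' \<le> length rs" "sum_list cs + (length rs - length rs') \<le> s"
      by fastforce
    have "hstep_r (P', Q') N (contractum_form n0 P' Q' As')"
      unfolding N by (rule hstep_r_redex_form)
    with rs' have "hpath ((P', Q') # rs') N (hnf_form n y Bs)"
      by (blast intro: hpath.intros)
    with rs' show ?case by (intro exI[of _ "(P', Q') # rs'"] exI[of _ Bs] exI[of _ cs]) auto
  next
    fix P' Q' As' k t
    assume red: "redex_reds k P Q As0 P' Q' As'" and s: "k + 1 + t = s"
      and t: "(beta ^^ t) (contractum_form n0 P' Q' As') N"
    from contractum_form_reds[OF simple(1) red] obtain k' where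
      "k' \<le> k" "(beta ^^ k') M1 (contractum_form n0 P' Q' As')"
      unfolding M1 by blast
    with t have "(beta ^^ (k' + t)) M1 N" by (meson relpowp_trans)
    with IH obtain rs' Bs cs where "hpath rs' N (hnf_form n y Bs)" "args_reds cs As Bs"
      "length rs' \<le> length rs" "sum_list cs + (length rs - length rs') \<le> k' + t"
      by blast
    with \<open>k' \<le> k\<close> s show ?case by (intro exI[of _ rs'] exI[of _ Bs] exI[of _ cs]) auto
  qed
qed

lemma bt_c_hpath: "hpath rs M (hnf_form n y As) \<Longrightarrow> bt_c M = Nd (length rs) n y (map bt_c As)"
  by (simp add: bt_c.ctr hpath_hnf_form_components)

lemma bt_c_no_hnf: "\<not> has_hnf M \<Longrightarrow> bt_c M = Bot"
  by (simp add: bt_c.ctr)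

lemma has_hnf_beta_reds: "beta_reds M N \<Longrightarrow> has_hnf N \<Longrightarrow> has_hnf M"
  unfolding has_hnf_def by (meson rtranclp_trans)

lemma simple_term_hpath:
  assumes "simple_term M" and "has_hnf M"
  obtains rs n y As where "hpath rs M (hnf_form n y As)" "\<forall>r\<in>set rs. simple_redex r"
    "\<forall>A\<in>set As. simple_term A"
  using assms(1)
proof (cases rule: simple_term.cases)
  case 1
  with assms(2) show ?thesis by simp
next
  case (2 rs H)
  from \<open>hnf H\<close> obtain n y As where "H = hnf_form n y As" by (rule hnfE)
  with 2 show ?thesis
    using that by (auto simp: strip_abs_hnf_form head_args_apps_Var)
qed

lemma bt_c_simple_term_reds_cases:
  assumes "simple_term M" and "(beta ^^ s) M N"
  obtains (Bot) "bt_c M = Bot" "bt_c N = Bot"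
  | (Nd) k k' n y As Bs cs where "bt_c M = Nd k n y (map bt_c As)"
      "bt_c N = Nd k' n y (map bt_c Bs)" "args_reds cs As Bs" "k' \<le> k"
      "sum_list cs + (k - k') \<le> s" "\<forall>A\<in>set As. simple_term A"
proof (cases "has_hnf M")
  case False
  with assms(2) have "\<not> has_hnf N"
    using has_hnf_beta_reds[OF relpowp_imp_rtranclp] by metis
  with False show ?thesis by (simp add: Bot bt_c_no_hnf)
next
  case True
  with assms(1) obtain rs n y As where M: "hpath rs M (hnf_form n y As)"
    "\<forall>r\<in>set rs. simple_redex r" "\<forall>A\<in>set As. simple_term A"
    by (rule simple_term_hpath)
  from simple_hpath_reds[OF M(1,2) assms(2)] obtain rs' Bs cs where
    N: "hpath rs' N (hnf_form n y Bs)" "args_reds cs As Bs" "length rs' \<le> length rs"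
      "sum_list cs + (length rs - length rs') \<le> s"
    by blast
  show ?thesis
    by (rule Nd[OF bt_c_hpath[OF M(1)] bt_c_hpath[OF N(1)] N(2-4) M(3)])
qed

lemma erase_Bot [simp]: "erase Bot = Bot"
  by (simp add: erase_def)

lemma erase_Nd [simp]: "erase (Nd a n y ts) = Nd () n y (map erase ts)"
  by (simp add: erase_def)

lemma erase_bt_c_beta_reds:
  assumes "simple_term M" and "beta_reds M N"
  shows "erase (bt_c M) = erase (bt_c N)"
  using assms
proof (coinduction arbitrary: M N rule: bt.coinduct)
  case (Eq_bt M N)
  from \<open>beta_reds M N\<close> obtain s where "(beta ^^ s) M N"
    by (auto simp: rtranclp_power)
  with \<open>simple_term M\<close> show ?case
  proof (cases rule: bt_c_simple_term_reds_cases)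
    case Bot
    then show ?thesis unfolding Bot by simp
  next
    case (Nd k k' n y As Bs cs)
    have "list_all2 (\<lambda>A B. simple_term A \<and> beta_reds A B) As Bs"
      using Nd(3,6)
      by (auto simp: args_reds_def list_all2_conv_all_nth intro: relpowp_imp_rtranclp)
    with Nd(1,2) show ?thesis
      by (auto simp: list.rel_map elim!: list_all2_mono)
  qed
qed

section \<open>Positions of differing annotations\<close>

lemma ann_at_Nd: "ann_at (Nd a n y ts) p = (if p = [] then Some a else spine_at n ts p)"
  by (cases p) auto

lemma ann_at_positions:
  fixes T :: "'a bt" and ts :: "'a bt list"
  shows "ann_at T p \<noteq> None \<Longrightarrow> set p \<subseteq> {0, 1, 2}"
    and "spine_at n ts p \<noteq> None \<Longrightarrow> set p \<subseteq> {0, 1, 2}"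
  by (induct T p and n ts p rule: ann_at_spine_at.induct) (auto split: if_splits)

lemma spine_at_replicate_0: "spine_at n ts (replicate n 0 @ p) = spine_at 0 ts p"
  by (induct n) auto

lemma spine_at_not_None:
  "spine_at n ts p \<noteq> None \<Longrightarrow> \<exists>p'. p = replicate n 0 @ p' \<and> spine_at 0 ts p' \<noteq> None"
proof (induct n arbitrary: p)
  case (Suc n)
  then obtain d p' where "p = d # p'" by (cases p) auto
  with Suc show ?case by (fastforce split: if_splits)
qed simp

lemma spine_at_0_not_None:
  "spine_at 0 ts p \<noteq> None \<Longrightarrow> \<exists>i q. i < length ts \<and> p = replicate (length ts - Suc i) 1 @ 2 # q"
proof (induct p arbitrary: ts)
  case (Cons d p)
  then have "ts \<noteq> []" by (auto split: if_splits)
  show ?case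
  proof (cases "d = 1")
    case True
    with Cons.prems \<open>ts \<noteq> []\<close> have "spine_at 0 (butlast ts) p \<noteq> None" by simp
    with Cons.hyps obtain i q where
      "i < length (butlast ts)" "p = replicate (length (butlast ts) - Suc i) 1 @ 2 # q"
      by blast
    moreover from this(1) have "length ts - Suc i = Suc (length (butlast ts) - Suc i)"
      by simp
    ultimately show ?thesis
      using True by (intro exI[of _ i] exI[of _ q]) simp
  next
    case False
    with Cons \<open>ts \<noteq> []\<close> have "d = 2" by (auto split: if_splits)
    with \<open>ts \<noteq> []\<close> show ?thesis
      by (intro exI[of _ "length ts - 1"] exI[of _ p]) simp
  qed
qed simp

lemma spine_at_0_arg:
  "j < length ts \<Longrightarrow> spine_at 0 ts (replicate j 1 @ 2 # q) = ann_at (ts ! (length ts - Suc j)) q"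
proof (induct j arbitrary: ts)
  case 0
  then show ?case by (auto simp: last_conv_nth)
next
  case (Suc j)
  then have "j < length (butlast ts)" by simp
  with Suc show ?case by (auto simp: nth_butlast)
qed

text \<open>The application spine is descended from the last argument, so argument i of m lies
  below m - 1 - i function edges.\<close>
definition arg_pos :: "nat \<Rightarrow> nat \<Rightarrow> nat \<Rightarrow> nat list" where
  "arg_pos n m i = replicate n 0 @ replicate (m - Suc i) 1 @ [2]"

lemma ann_at_Nd_arg_pos:
  assumes "i < length ts"
  shows "ann_at (Nd a n y ts) (arg_pos n (length ts) i @ q) = ann_at (ts ! i) q"
  using assms spine_at_0_arg[of "length ts - Suc i" ts q]
  by (simp add: arg_pos_def ann_at_Nd spine_at_replicate_0)

lemma ann_at_Nd_not_None:
  assumes "ann_at (Nd a n y ts) p \<noteq> None" and "p \<noteq> []"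
  shows "\<exists>i q. i < length ts \<and> p = arg_pos n (length ts) i @ q"
proof -
  from assms have "spine_at n ts p \<noteq> None" by (simp add: ann_at_Nd)
  from spine_at_not_None[OF this] obtain p' where
    p: "p = replicate n 0 @ p'" and p': "spine_at 0 ts p' \<noteq> None"
    by blast
  from spine_at_0_not_None[OF p'] obtain i q where
    "i < length ts" "p' = replicate (length ts - Suc i) 1 @ 2 # q"
    by blast
  with p show ?thesis
    unfolding arg_pos_def by (intro exI[of _ i] exI[of _ q]) simp
qed

definition ann_diff :: "'a bt \<Rightarrow> 'a bt \<Rightarrow> nat \<Rightarrow> nat list set" where
  "ann_diff T1 T2 L = {p. length p \<le> L \<and> ann_at T1 p \<noteq> ann_at T2 p}"

lemma finite_ann_diff: "finite (ann_diff T1 T2 L)"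
proof (rule finite_subset)
  show "ann_diff T1 T2 L \<subseteq> {p. set p \<subseteq> {0, 1, 2} \<and> length p \<le> L}"
  proof
    fix p
    assume "p \<in> ann_diff T1 T2 L"
    then have "length p \<le> L" "ann_at T1 p \<noteq> None \<or> ann_at T2 p \<noteq> None"
      by (auto simp: ann_diff_def)
    then show "p \<in> {p. set p \<subseteq> {0, 1, 2} \<and> length p \<le> L}"
      using ann_at_positions(1)[of T1 p] ann_at_positions(1)[of T2 p] by auto
  qed
  show "finite {p. set p \<subseteq> {0, 1, 2 :: nat} \<and> length p \<le> L}"
    by (rule finite_lists_length_le) simp
qed

lemma ann_diff_Bot [simp]: "ann_diff Bot Bot L = {}"
  by (simp add: ann_diff_def)

lemma ann_diff_Nd_0:
  "ann_diff (Nd a1 n y ts1) (Nd a2 n' y' ts2) 0 = (if a1 = a2 then {} else {[]})"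
  by (auto simp: ann_diff_def)

lemma ann_diff_Nd_Suc:
  assumes "length ts1 = m" and "length ts2 = m"
  shows "ann_diff (Nd a1 n y ts1) (Nd a2 n y' ts2) (Suc L) \<subseteq>
    (if a1 = a2 then {} else {[]}) \<union> (\<Union>i<m. (@) (arg_pos n m i) ` ann_diff (ts1 ! i) (ts2 ! i) L)"
proof
  fix p
  assume p: "p \<in> ann_diff (Nd a1 n y ts1) (Nd a2 n y' ts2) (Suc L)"
  show "p \<in> (if a1 = a2 then {} else {[]}) \<union>
    (\<Union>i<m. (@) (arg_pos n m i) ` ann_diff (ts1 ! i) (ts2 ! i) L)"
  proof (cases "p = []")
    case True
    with p show ?thesis by (simp add: ann_diff_def)
  next
    case False
    from p have "ann_at (Nd a1 n y ts1) p \<noteq> None \<or> ann_at (Nd a2 n y' ts2) p \<noteq> None"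
      by (auto simp: ann_diff_def)
    with False assms obtain i q where iq: "i < m" "p = arg_pos n m i @ q"
      using ann_at_Nd_not_None by metis
    moreover have "ann_at (Nd a1 n y ts1) p = ann_at (ts1 ! i) q"
      "ann_at (Nd a2 n y' ts2) p = ann_at (ts2 ! i) q"
      using iq assms ann_at_Nd_arg_pos by metis+
    ultimately have "q \<in> ann_diff (ts1 ! i) (ts2 ! i) L"
      using p by (auto simp: ann_diff_def arg_pos_def)
    with iq show ?thesis by blast
  qed
qed

lemma card_ann_diff_Nd_Suc:
  assumes "length ts1 = length cs" and "length ts2 = length cs"
    and "\<And>i. i < length cs \<Longrightarrow> card (ann_diff (ts1 ! i) (ts2 ! i) L) \<le> cs ! i"
  shows "card (ann_diff (Nd a1 n y ts1) (Nd a2 n y' ts2) (Suc L)) \<le> of_bool (a1 \<noteq> a2) + sum_list cs"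
proof -
  let ?m = "length cs"
  let ?R = "if a1 = a2 then {} else {[]} :: nat list set"
  let ?C = "\<lambda>i. (@) (arg_pos n ?m i) ` ann_diff (ts1 ! i) (ts2 ! i) L"
  have "card (ann_diff (Nd a1 n y ts1) (Nd a2 n y' ts2) (Suc L)) \<le> card (?R \<union> (\<Union>i<?m. ?C i))"
    by (rule card_mono) (simp_all add: finite_ann_diff ann_diff_Nd_Suc assms(1,2))
  also have "\<dots> \<le> card ?R + (\<Sum>i<?m. card (?C i))"
    using card_Un_le card_UN_le[of "{..<?m}" ?C] by (meson add_left_mono finite_lessThan order_trans)
  also have "\<dots> \<le> of_bool (a1 \<noteq> a2) + (\<Sum>i<?m. cs ! i)"
  proof (intro add_mono sum_mono)
    fix i
    assume "i \<in> {..<?m}"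
    with assms(3) show "card (?C i) \<le> cs ! i"
      using card_image_le[OF finite_ann_diff] le_trans by blast
  qed simp
  also have "\<dots> = of_bool (a1 \<noteq> a2) + sum_list cs"
    by (simp add: sum_list_sum_nth atLeast0LessThan)
  finally show ?thesis .
qed

lemma ann_at_eventually_eq:
  assumes "\<And>L. card (ann_diff T1 T2 L) \<le> s"
  shows "\<exists>l. \<forall>p. l \<le> length p \<longrightarrow> ann_at T1 p = ann_at T2 p"
proof -
  define A where "A = {p. ann_at T1 p \<noteq> ann_at T2 p}"
  have "finite A"
  proof (rule ccontr)
    assume "infinite A"
    then obtain F where F: "finite F" "card F = Suc s" "F \<subseteq> A"
      using infinite_arbitrarily_large by blast
    then have "F \<subseteq> ann_diff T1 T2 (Max (length ` F))"
      unfolding ann_diff_def A_def by (auto intro: Max_ge)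
    then have "card F \<le> card (ann_diff T1 T2 (Max (length ` F)))"
      by (rule card_mono[OF finite_ann_diff])
    with assms F(2) show False by (metis not_less_eq_eq order_trans)
  qed
  then obtain b where "\<forall>p\<in>A. length p \<le> b"
    using finite_nat_set_iff_bounded_le[of "length ` A"] by auto
  then have "\<forall>p. Suc b \<le> length p \<longrightarrow> ann_at T1 p = ann_at T2 p"
    unfolding A_def by force
  then show ?thesis ..
qed

lemma card_ann_diff_bt_c_beta_reds:
  "simple_term M \<Longrightarrow> (beta ^^ s) M N \<Longrightarrow> card (ann_diff (bt_c M) (bt_c N) L) \<le> s"
proof (induct L arbitrary: M N s)
  case 0
  then show ?case
  proof (cases rule: bt_c_simple_term_reds_cases)
    case Bot
    then show ?thesis unfolding Bot by simp
  next
    case (Nd k k' n y As Bs cs)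
    then show ?thesis by (auto simp: ann_diff_Nd_0)
  qed
next
  case (Suc L)
  from Suc.prems show ?case
  proof (cases rule: bt_c_simple_term_reds_cases)
    case Bot
    then show ?thesis unfolding Bot by simp
  next
    case (Nd k k' n y As Bs cs)
    have "card (ann_diff (bt_c M) (bt_c N) (Suc L)) \<le> of_bool (k \<noteq> k') + sum_list cs"
      unfolding Nd(1,2)
    proof (rule card_ann_diff_Nd_Suc)
      fix i
      assume "i < length cs"
      with Nd(3,6) show "card (ann_diff (map bt_c As ! i) (map bt_c Bs ! i) L) \<le> cs ! i"
        by (auto simp: args_reds_def intro: Suc.hyps)
    qed (use Nd(3) in \<open>simp_all add: args_reds_def\<close>)
    moreover have "of_bool (k \<noteq> k') \<le> k - k'"
      using Nd(4) by (cases "k = k'") simp_all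
    ultimately show ?thesis
      using Nd(5) by linarith
  qed
qed

theorem proposition4p9:
  assumes "simple_term M"
    and "beta_reds M N"
  shows "ev_eq (bt_c M) (bt_c N)"
proof -
  from assms(2) obtain s where "(beta ^^ s) M N"
    by (auto simp: rtranclp_power)
  then have "\<exists>l. \<forall>p. l \<le> length p \<longrightarrow> ann_at (bt_c M) p = ann_at (bt_c N) p"
    by (intro ann_at_eventually_eq card_ann_diff_bt_c_beta_reds assms(1))
  with erase_bt_c_beta_reds[OF assms] show ?thesis
    unfolding ev_eq_def by blast
qed

end
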